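(* For every $n \ge 1$, $$ f^+_n(x) = \big(2(n-1)x - 1\big) f^+_{n-1}(x) + 2x(1-x) \frac{d f^+_{n-1}}{dx}(x) + 2(n-1)x\, f^+_{n-2}(x) + d^B_{n-1}(x), $$ with the convention $f^+_{-1}(x) = 0$.
   Context: A signed permutation of $[n]$ is a set $S = \{a_1, \dots, a_n\}$ with $a_i \in \{i, -i\}$, together with a bijection $w : S \to S$. - $a \in S$ is a $B$-excedance if $w(a) > a$, or if $a < 0$ and $w(a) = a$. - $w$ is a derangement if no $a \in S$ with $a > 0$ has $w(a) = a$. - $d^B_n(x) = \sum_{w \text{ derangement}} x^{\mathrm{exc}_B(w)}$, where $\mathrm{exc}_B(w)$ is the number of $B$-excedances, and $d^B_0 = 1$. - $f^+_n, f^-_n$ are the unique real polynomials with $d^B_n = f^+_n + f^-_n$, $f^+_n(x) = x^n f^+_n(1/x)$ and $f^-_n(x) = x^{n+1} f^-_n(1/x)$. *)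

theory Defs
  imports "HOL-Computational_Algebra.Polynomial"
begin

text \<open>A signed permutation of [n]: a pair (S, w) where S contains exactly one of
  i, -i for each i in {1..n} and nothing else, and w is a bijection S -> S
  (extended by the identity outside S, so that each signed permutation has a
  unique representative).\<close>
definition signed_perms :: "nat \<Rightarrow> (int set \<times> (int \<Rightarrow> int)) set" where
  "signed_perms n = {(S, w).
     S \<subseteq> {a. a \<noteq> 0 \<and> \<bar>a\<bar> \<le> int n} \<and>
     (\<forall>i\<in>{1..n}. (int i \<in> S) \<noteq> (- int i \<in> S)) \<and>
     bij_betw w S S \<and> (\<forall>x. x \<notin> S \<longrightarrow> w x = x)}"

definition is_B_exc :: "int set \<times> (int \<Rightarrow> int) \<Rightarrow> int \<Rightarrow> bool" where
  "is_B_exc p a \<longleftrightarrow> a \<in> fst p \<and> (snd p a > a \<or> (a < 0 \<and> snd p a = a))"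

definition exc_B :: "int set \<times> (int \<Rightarrow> int) \<Rightarrow> nat" where
  "exc_B p = card {a. is_B_exc p a}"

definition is_derangement :: "int set \<times> (int \<Rightarrow> int) \<Rightarrow> bool" where
  "is_derangement p \<longleftrightarrow> (\<forall>a\<in>fst p. a > 0 \<longrightarrow> snd p a \<noteq> a)"

definition dB :: "nat \<Rightarrow> real poly" where
  "dB n = (\<Sum>p\<in>{p\<in>signed_perms n. is_derangement p}. monom 1 (exc_B p))"

definition fplus_fminus :: "nat \<Rightarrow> real poly \<times> real poly" where
  "fplus_fminus n = (THE (p, q). dB n = p + q \<and>
      (\<forall>x::real. x \<noteq> 0 \<longrightarrow> poly p x = x ^ n * poly p (1 / x)) \<and>
      (\<forall>x::real. x \<noteq> 0 \<longrightarrow> poly q x = x ^ (n + 1) * poly q (1 / x)))"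

definition fplus :: "nat \<Rightarrow> real poly" where
  "fplus n = fst (fplus_fminus n)"

definition fminus :: "nat \<Rightarrow> real poly" where
  "fminus n = snd (fplus_fminus n)"

end

theory Submission
  imports Defs "HOL-Combinatorics.Permutations"
begin

text \<open>
  Write \<open>d(A)\<close> for the B-excedance polynomial of the signed derangements of a finite set \<open>A\<close>
  of positive letters and let \<open>m > max A\<close>. A signed derangement of \<open>A \<union> {m}\<close> arises in exactly
  one way from smaller data: by adding the fixed point \<open>-m\<close> to a derangement of \<open>A\<close>; by inserting
  \<open>m\<close> or \<open>-m\<close> right after a letter \<open>b\<close> in a cycle of a derangement of \<open>A\<close>; or by forming the
  2-cycle of \<open>b > 0\<close> with \<open>m\<close> or \<open>-m\<close> next to a derangement of \<open>A - {b}\<close>. Because \<open>m\<close> is the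
  largest letter, the change in the number of B-excedances is explicit in each case, and one gets
  \<open>d(n+2) = x d(n+1) + E(n+1) d(n+1) + 2(n+1) x d(n)\<close> with \<open>E(k) f = 2kxf + 2x(1-x)f'\<close>.

  The operator \<open>E(k)\<close> maps palindromic polynomials of degree \<open>k\<close> to palindromic ones of degree
  \<open>k + 1\<close>. Splitting every term of the recursion by its palindromic degree therefore defines
  \<open>a(n) + b(n) = d(n)\<close> with \<open>a(n)\<close> palindromic of degree \<open>n\<close> and \<open>b(n)\<close> of degree \<open>n + 1\<close>; such a
  splitting is unique, so \<open>a(n) = f\<^sup>+(n)\<close>, and the recursion for \<open>a(n)\<close> is the claimed one.
\<close>

section \<open>Palindromic polynomials\<close>

definition palindromic :: "nat \<Rightarrow> 'a::zero poly \<Rightarrow> bool" where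
  "palindromic k p \<longleftrightarrow> (\<forall>i. coeff p i = (if i \<le> k then coeff p (k - i) else 0))"

lemma palindromicI:
  assumes "\<And>i. i \<le> k \<Longrightarrow> coeff p i = coeff p (k - i)" and "\<And>i. k < i \<Longrightarrow> coeff p i = 0"
  shows "palindromic k p"
  using assms unfolding palindromic_def by (metis not_le)

lemma palindromicD: "palindromic k p \<Longrightarrow> i \<le> k \<Longrightarrow> coeff p i = coeff p (k - i)"
  unfolding palindromic_def by metis

lemma palindromic_coeff_eq_0: "palindromic k p \<Longrightarrow> k < i \<Longrightarrow> coeff p i = 0"
  unfolding palindromic_def by (metis not_le)

lemma palindromic_0 [simp]: "palindromic k 0"
  by (simp add: palindromic_def)

lemma palindromic_1: "palindromic 0 1"
  by (rule palindromicI) (auto simp: coeff_1)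

lemma palindromic_add:
  "palindromic k p \<Longrightarrow> palindromic k q \<Longrightarrow> palindromic k (p + q :: 'a::comm_monoid_add poly)"
  by (intro palindromicI) (simp_all only: coeff_add, metis palindromicD, simp add: palindromic_coeff_eq_0)

lemma palindromic_diff:
  "palindromic k p \<Longrightarrow> palindromic k q \<Longrightarrow> palindromic k (p - q :: 'a::ab_group_add poly)"
  by (intro palindromicI) (simp_all only: coeff_diff, metis palindromicD, simp add: palindromic_coeff_eq_0)

lemma palindromic_smult: "palindromic k p \<Longrightarrow> palindromic k (smult c p)"
  by (intro palindromicI) (simp_all only: coeff_smult, metis palindromicD, simp add: palindromic_coeff_eq_0)

lemma palindromic_times_x:
  assumes "palindromic k p"
  shows "palindromic (Suc (Suc k)) ([:0, 1:] * p :: 'a::comm_semiring_1 poly)"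
proof (rule palindromicI)
  fix i assume "i \<le> Suc (Suc k)"
  then show "coeff ([:0, 1:] * p) i = coeff ([:0, 1:] * p) (Suc (Suc k) - i)"
    using palindromicD[OF assms, of "i - 1"] palindromic_coeff_eq_0[OF assms, of "k + 1"]
    by (auto simp: coeff_pCons' Suc_diff_le)
qed (use palindromic_coeff_eq_0[OF assms] in \<open>simp add: coeff_pCons'\<close>)

lemma palindromic_times_1_plus_x:
  assumes "palindromic k p"
  shows "palindromic (Suc k) ([:1, 1:] * p :: 'a::comm_semiring_1 poly)"
proof (rule palindromicI)
  fix i assume "i \<le> Suc k"
  then show "coeff ([:1, 1:] * p) i = coeff ([:1, 1:] * p) (Suc k - i)"
    using palindromicD[OF assms, of i] palindromicD[OF assms, of "i - 1"]
      palindromic_coeff_eq_0[OF assms, of "k + 1"]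
    by (auto simp: coeff_pCons' Suc_diff_le add.commute)
qed (use palindromic_coeff_eq_0[OF assms] in \<open>simp add: coeff_pCons'\<close>)

lemma poly_palindromic:
  fixes p :: "'a::field poly"
  assumes "palindromic k p" and "x \<noteq> 0"
  shows "poly p x = x ^ k * poly p (1 / x)"
proof -
  have "degree p \<le> k"
    using palindromic_coeff_eq_0[OF assms(1)] by (intro degree_le) auto
  then have poly_sum: "poly p y = (\<Sum>i\<le>k. coeff p i * y ^ i)" for y
    by (auto simp: poly_altdef coeff_eq_0 le_degree intro!: sum.mono_neutral_left)
  have "poly p x = (\<Sum>i\<le>k. coeff p (k - i) * x ^ (k - i))"
    unfolding poly_sum by (rule sum.reindex_bij_witness[of _ "\<lambda>i. k - i" "\<lambda>i. k - i"]) auto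
  also have "\<dots> = (\<Sum>i\<le>k. x ^ k * (coeff p i * (1 / x) ^ i))"
  proof (intro sum.cong refl)
    fix i assume "i \<in> {..k}"
    then have "coeff p (k - i) = coeff p i" and "x ^ (k - i) = x ^ k / x ^ i"
      using assms palindromicD[OF assms(1), of i] by (simp_all add: power_diff)
    then show "coeff p (k - i) * x ^ (k - i) = x ^ k * (coeff p i * (1 / x) ^ i)"
      by (simp add: power_one_over)
  qed
  finally show ?thesis
    by (simp add: poly_sum sum_distrib_left)
qed

lemma reciprocal_poly_eq_0:
  fixes r :: "real poly"
  assumes "\<And>x. x \<noteq> 0 \<Longrightarrow> poly r x = x ^ n * poly r (1 / x)"
    and "\<And>x. x \<noteq> 0 \<Longrightarrow> poly r x = x ^ Suc n * poly r (1 / x)"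
  shows "r = 0"
proof -
  have "poly r y = 0" if "y < 0" for y
  proof -
    have "(1 / y) ^ n * poly r y = (1 / y) ^ Suc n * poly r y"
      using assms[of "1 / y"] that by simp
    then have "((1 / y) ^ n * (1 - 1 / y)) * poly r y = 0"
      by (simp add: algebra_simps)
    moreover have "(1 / y) ^ n * (1 - 1 / y) \<noteq> 0"
      using that by simp
    ultimately show ?thesis
      by (metis mult_eq_0_iff)
  qed
  then have "{..<0} \<subseteq> {y. poly r y = 0}"
    by auto
  then show ?thesis
    using poly_roots_finite infinite_Iio finite_subset by blast
qed

definition eulerian_op :: "nat \<Rightarrow> real poly \<Rightarrow> real poly" where
  "eulerian_op k f = smult (2 * real k) ([:0, 1:] * f) + [:0, 2, -2:] * pderiv f"

lemma coeff_eulerian_op: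
  "coeff (eulerian_op k f) i =
     (if i = 0 then 0 else 2 * real i * coeff f i + 2 * (real k + 1 - real i) * coeff f (i - 1))"
  by (cases i; cases "i - 1") (auto simp: eulerian_op_def coeff_pderiv algebra_simps)

lemma palindromic_eulerian_op:
  assumes "palindromic k f"
  shows "palindromic (Suc k) (eulerian_op k f)"
proof (rule palindromicI)
  fix i assume "i \<le> Suc k"
  then show "coeff (eulerian_op k f) i = coeff (eulerian_op k f) (Suc k - i)"
    using palindromicD[OF assms, of i] palindromicD[OF assms, of "i - 1"]
      palindromic_coeff_eq_0[OF assms, of "k + 1"]
    by (auto simp: coeff_eulerian_op of_nat_diff Suc_diff_le algebra_simps)
qed (use palindromic_coeff_eq_0[OF assms] in \<open>simp add: coeff_eulerian_op\<close>)

lemma eulerian_op_0 [simp]: "eulerian_op k 0 = 0"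
  by (simp add: eulerian_op_def)

lemma eulerian_op_add: "eulerian_op k (f + g) = eulerian_op k f + eulerian_op k g"
  by (simp add: eulerian_op_def pderiv_add smult_add_right distrib_left)

lemma eulerian_op_Suc: "eulerian_op (Suc k) f = eulerian_op k f + smult 2 ([:0, 1:] * f)"
  by (simp add: eulerian_op_def smult_add_left algebra_simps)

lemma eulerian_op_sum: "eulerian_op k (\<Sum>a\<in>A. f a) = (\<Sum>a\<in>A. eulerian_op k (f a))"
  by (induction A rule: infinite_finite_induct) (simp_all add: eulerian_op_add)

lemma eulerian_op_monom:
  assumes "e \<le> k"
  shows "eulerian_op k (monom 1 e) = monom (2 * real e) e + monom (2 * real (k - e)) (e + 1)"
  using assms by (auto simp: poly_eq_iff coeff_eulerian_op coeff_monom of_nat_diff)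

lemma sum_monom_if:
  assumes "finite S" and "E \<subseteq> S"
  shows "(\<Sum>b\<in>S. monom c (if b \<in> E then e else Suc e))
    = monom (c * real (card E)) e + monom (c * real (card S - card E)) (Suc e)"
proof -
  have "(\<Sum>b\<in>S. monom c (if b \<in> E then e else Suc e))
      = (\<Sum>b\<in>E. monom c e) + (\<Sum>b\<in>S - E. monom c (Suc e))"
    using assms by (simp add: if_distrib sum.If_cases Int_absorb1 Diff_eq)
  also have "\<dots> = monom (c * real (card E)) e + monom (c * real (card S - card E)) (Suc e)"
    using assms by (simp add: card_Diff_subset finite_subset of_nat_monom mult_monom mult.commute)
  finally show ?thesis .
qed

section \<open>Signed permutations of a set of letters\<close>

text \<open>Over a set \<open>A\<close> of positive letters, the sign condition of \<open>signed_perms\<close> says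
  exactly that \<open>abs\<close> maps the support \<open>S\<close> bijectively onto \<open>A\<close>.\<close>

definition signed_perms_on :: "int set \<Rightarrow> (int set \<times> (int \<Rightarrow> int)) set" where
  "signed_perms_on A = {(S, w). bij_betw abs S A \<and> w permutes S}"

definition derangements_on :: "int set \<Rightarrow> (int set \<times> (int \<Rightarrow> int)) set" where
  "derangements_on A = {p \<in> signed_perms_on A. is_derangement p}"

definition dB_on :: "int set \<Rightarrow> real poly" where
  "dB_on A = (\<Sum>p\<in>derangements_on A. monom 1 (exc_B p))"

definition B_excedances :: "int set \<times> (int \<Rightarrow> int) \<Rightarrow> int set" where
  "B_excedances p = {a. is_B_exc p a}"

lemma exc_B_eq_card: "exc_B p = card (B_excedances p)"
  by (simp add: exc_B_def B_excedances_def)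

lemma bij_betw_abs_signs:
  fixes A :: "int set"
  assumes "bij_betw abs S A" and "\<forall>a\<in>A. 0 < a"
  shows "S \<subseteq> A \<union> uminus ` A" and "\<forall>i\<in>A. (i \<in> S) \<noteq> (- i \<in> S)"
proof -
  have "i \<in> S \<or> - i \<in> S" if "i \<in> A" for i
  proof -
    obtain x where "x \<in> S" "\<bar>x\<bar> = i"
      using assms(1) \<open>i \<in> A\<close> by (auto simp: bij_betw_def)
    moreover from \<open>\<bar>x\<bar> = i\<close> have "x = i \<or> x = - i"
      by arith
    ultimately show ?thesis
      by auto
  qed
  moreover have "\<not> (i \<in> S \<and> - i \<in> S)" if "i \<in> A" for i
  proof
    assume "i \<in> S \<and> - i \<in> S"
    with assms(1) have "i = - i"
      using inj_onD[of abs S i "- i"] by (simp add: bij_betw_def)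
    with assms(2) that show False
      by auto
  qed
  ultimately show "\<forall>i\<in>A. (i \<in> S) \<noteq> (- i \<in> S)"
    by blast
  show "S \<subseteq> A \<union> uminus ` A"
    using assms(1) by (auto simp: bij_betw_def abs_if intro: image_eqI[of _ _ "- _"])
qed

lemma bij_betw_absI:
  fixes A :: "int set"
  assumes "\<forall>a\<in>A. 0 < a" and "S \<subseteq> A \<union> uminus ` A" and "\<forall>i\<in>A. (i \<in> S) \<noteq> (- i \<in> S)"
  shows "bij_betw abs S A"
proof -
  have abs_mem: "\<bar>x\<bar> \<in> A" if "x \<in> S" for x
  proof -
    from that assms(2) have "x \<in> A \<or> - x \<in> A"
      by (auto simp: image_iff)
    with assms(1) show ?thesis
      by (auto simp: abs_if)
  qed
  have "inj_on abs S"
  proof (rule inj_onI)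
    fix x y assume "x \<in> S" "y \<in> S" "\<bar>x\<bar> = \<bar>y\<bar>"
    show "x = y"
    proof (rule ccontr)
      assume "x \<noteq> y"
      with \<open>\<bar>x\<bar> = \<bar>y\<bar>\<close> have "y = - x"
        by arith
      with \<open>x \<in> S\<close> \<open>y \<in> S\<close> have "\<bar>x\<bar> \<in> S \<and> - \<bar>x\<bar> \<in> S"
        by (auto simp: abs_if)
      with assms(3) abs_mem[OF \<open>x \<in> S\<close>] show False
        by blast
    qed
  qed
  moreover have "A \<subseteq> abs ` S"
    using assms by (metis abs_minus_cancel abs_of_pos image_eqI subsetI)
  ultimately show "bij_betw abs S A"
    using abs_mem by (auto simp: bij_betw_def)
qed

lemma bij_betw_abs_iff:
  fixes A :: "int set"
  assumes "\<forall>a\<in>A. 0 < a"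
  shows "bij_betw abs S A \<longleftrightarrow> S \<subseteq> A \<union> uminus ` A \<and> (\<forall>i\<in>A. (i \<in> S) \<noteq> (- i \<in> S))"
  using assms bij_betw_abs_signs bij_betw_absI by blast

lemma signed_perms_eq: "signed_perms n = signed_perms_on {1..int n}"
proof -
  have ground: "{a. a \<noteq> 0 \<and> \<bar>a\<bar> \<le> int n} = {1..int n} \<union> uminus ` {1..int n}"
  proof (intro set_eqI iffI)
    fix a :: int assume "a \<in> {a. a \<noteq> 0 \<and> \<bar>a\<bar> \<le> int n}"
    then show "a \<in> {1..int n} \<union> uminus ` {1..int n}"
      by (cases "a > 0") (auto intro!: image_eqI[of _ _ "- a"])
  qed auto
  have signs: "(\<forall>i\<in>{1..n}. P (int i)) \<longleftrightarrow> (\<forall>i\<in>{1..int n}. P i)" for P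
  proof (intro iffI ballI)
    fix i assume "\<forall>i\<in>{1..n}. P (int i)" and "i \<in> {1..int n}"
    moreover have "nat i \<in> {1..n}" "int (nat i) = i"
      using \<open>i \<in> {1..int n}\<close> by auto
    ultimately show "P i"
      by metis
  qed auto
  have perm: "bij_betw w S S \<and> (\<forall>x. x \<notin> S \<longrightarrow> w x = x) \<longleftrightarrow> w permutes S"
    for w and S :: "int set"
    by (auto intro: bij_imp_permutes permutes_imp_bij permutes_not_in)
  show ?thesis
  proof (intro set_eqI)
    fix p :: "int set \<times> (int \<Rightarrow> int)"
    obtain S w where p: "p = (S, w)"
      by (cases p)
    have "bij_betw abs S {1..int n}
        \<longleftrightarrow> S \<subseteq> {1..int n} \<union> uminus ` {1..int n} \<and> (\<forall>i\<in>{1..int n}. (i \<in> S) \<noteq> (- i \<in> S))"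
      by (rule bij_betw_abs_iff) auto
    then show "p \<in> signed_perms n \<longleftrightarrow> p \<in> signed_perms_on {1..int n}"
      using signs[of "\<lambda>i. (i \<in> S) \<noteq> (- i \<in> S)"] perm[of w S]
      unfolding p signed_perms_def signed_perms_on_def ground by simp
  qed
qed

lemma dB_eq_dB_on: "dB n = dB_on {1..int n}"
  by (simp add: dB_def dB_on_def derangements_on_def signed_perms_eq)

lemma abs_mem_signed_perms_on: "(S, w) \<in> signed_perms_on A \<Longrightarrow> x \<in> S \<Longrightarrow> \<bar>x\<bar> \<in> A"
  by (auto simp: signed_perms_on_def bij_betw_def)

lemma finite_derangements_on:
  assumes "finite A"
  shows "finite (derangements_on A)"
proof -
  let ?U = "A \<union> uminus ` A"
  have "(S, w) \<in> Pow ?U \<times> {w. w permutes ?U}" if "(S, w) \<in> signed_perms_on A" for S w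
  proof -
    have "x \<in> ?U" if "x \<in> S" for x
      using abs_mem_signed_perms_on[OF \<open>(S, w) \<in> signed_perms_on A\<close> that]
      by (cases "x < 0") (auto simp: abs_if intro: image_eqI[of _ _ "- x"])
    then have "S \<subseteq> ?U"
      by blast
    moreover have "w permutes ?U"
      using that permutes_subset[of w S ?U] \<open>S \<subseteq> ?U\<close> by (simp add: signed_perms_on_def)
    ultimately show ?thesis
      by simp
  qed
  then have "derangements_on A \<subseteq> Pow ?U \<times> {w. w permutes ?U}"
    by (auto simp: derangements_on_def)
  moreover have "finite (Pow ?U \<times> {w. w permutes ?U})"
    using assms by (simp add: finite_permutations)
  ultimately show ?thesis
    by (rule finite_subset)
qed

lemma finite_B_excedances:
  "finite A \<Longrightarrow> (S, w) \<in> signed_perms_on A \<Longrightarrow> finite (B_excedances (S, w))"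
  by (rule finite_subset[of _ S])
    (auto simp: B_excedances_def is_B_exc_def signed_perms_on_def bij_betw_finite)

lemma exc_B_le_card:
  assumes "finite A" and "(S, w) \<in> signed_perms_on A"
  shows "exc_B (S, w) \<le> card A"
proof -
  have "exc_B (S, w) \<le> card S"
    using assms by (auto simp: exc_B_def is_B_exc_def signed_perms_on_def bij_betw_finite
        intro!: card_mono)
  also have "card S = card A"
    using assms(2) bij_betw_same_card by (auto simp: signed_perms_on_def)
  finally show ?thesis .
qed

lemma dB_on_empty: "dB_on {} = 1"
proof -
  have "derangements_on {} = {({}, id)}"
    by (auto simp: derangements_on_def signed_perms_on_def is_derangement_def bij_betw_def)
  then show ?thesis
    by (simp add: dB_on_def exc_B_def is_B_exc_def)
qed

lemma signed_perms_on_insert_fixed: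
  assumes "(S, w) \<in> signed_perms_on A" and "\<bar>x\<bar> \<notin> A"
  shows "(insert x S, w) \<in> signed_perms_on (insert \<bar>x\<bar> A)"
proof -
  have "x \<notin> S"
    using assms abs_mem_signed_perms_on by blast
  have "bij_betw abs (insert x S) (insert \<bar>x\<bar> A)"
    using assms \<open>x \<notin> S\<close> notIn_Un_bij_betw[of x S abs A] by (simp add: signed_perms_on_def)
  moreover have "w permutes insert x S"
    using assms(1) permutes_subset[of w S "insert x S"] by (auto simp: signed_perms_on_def)
  ultimately show ?thesis
    by (simp add: signed_perms_on_def)
qed

lemma signed_perms_on_remove_fixed:
  assumes "(S, w) \<in> signed_perms_on (insert \<bar>x\<bar> A)" and "\<bar>x\<bar> \<notin> A" and "x \<in> S" and "w x = x"
  shows "(S - {x}, w) \<in> signed_perms_on A"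
proof -
  have "bij_betw abs S (insert \<bar>x\<bar> A)" and "w permutes S"
    using assms(1) by (simp_all add: signed_perms_on_def)
  then have "bij_betw abs (S - {x}) (insert \<bar>x\<bar> A - {\<bar>x\<bar>})"
    using assms(3) by (intro bij_betw_DiffI) auto
  moreover have "w permutes S - {x}"
    using \<open>w permutes S\<close> by (rule permutes_superset) (use assms(4) in auto)
  ultimately show ?thesis
    using assms(2) by (simp add: signed_perms_on_def)
qed

lemma signed_perms_on_Diff_fixed:
  assumes "(S, w) \<in> signed_perms_on (A - {b})" and "0 \<le> b"
  shows "b \<notin> S" and "w b = b"
proof -
  show "b \<notin> S"
    using abs_mem_signed_perms_on[OF assms(1), of b] assms(2) by auto
  with assms(1) show "w b = b"
    by (auto simp: signed_perms_on_def permutes_not_in)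
qed

lemma B_excedances_insert_fixed:
  assumes "x \<notin> S" and "w x = x"
  shows "B_excedances (insert x S, w)
    = (if x < 0 then insert x (B_excedances (S, w)) else B_excedances (S, w))"
  using assms by (auto simp: B_excedances_def is_B_exc_def)

lemma permutes_insert_cycle:
  assumes "w permutes S" and "b \<in> S" and "s \<notin> S"
  shows "transpose (w b) s \<circ> w permutes insert s S"
proof (rule permutes_compose)
  show "w permutes insert s S"
    using assms(1) by (rule permutes_subset) auto
  show "transpose (w b) s permutes insert s S"
    using assms by (intro permutes_swap_id) (auto simp: permutes_in_image)
qed

lemma insert_cycle_apply:
  assumes "w permutes S" and "b \<in> S" and "s \<notin> S"
  shows "(transpose (w b) s \<circ> w) s = w b" and "(transpose (w b) s \<circ> w) b = s"
    and "a \<in> S \<Longrightarrow> a \<noteq> b \<Longrightarrow> (transpose (w b) s \<circ> w) a = w a"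
proof -
  have "w s = s" "w b \<in> S"
    using assms by (simp_all add: permutes_not_in permutes_in_image)
  then show "(transpose (w b) s \<circ> w) s = w b" "(transpose (w b) s \<circ> w) b = s"
    using assms(3) by auto
  assume "a \<in> S" "a \<noteq> b"
  then have "w a \<noteq> w b" "w a \<in> S"
    using assms(1,2) by (auto simp: permutes_in_image dest: permutes_inj_on[THEN inj_onD])
  then show "(transpose (w b) s \<circ> w) a = w a"
    using assms(3) by (auto simp: transpose_def)
qed

lemma signed_perms_on_insert_cycle:
  assumes "(S, w) \<in> signed_perms_on A" and "b \<in> S" and "\<bar>s\<bar> \<notin> A"
  shows "(insert s S, transpose (w b) s \<circ> w) \<in> signed_perms_on (insert \<bar>s\<bar> A)"
proof -
  have "s \<notin> S"
    using assms abs_mem_signed_perms_on by blast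
  then show ?thesis
    using assms notIn_Un_bij_betw[of s S abs A] permutes_insert_cycle[of w S b s]
    by (simp add: signed_perms_on_def)
qed

lemma signed_perms_on_remove_cycle:
  assumes "(S, w) \<in> signed_perms_on (insert \<bar>s\<bar> A)" and "\<bar>s\<bar> \<notin> A" and "s \<in> S"
  shows "(S - {s}, transpose s (w s) \<circ> w) \<in> signed_perms_on A"
proof -
  have "bij_betw abs S (insert \<bar>s\<bar> A)" and perm: "w permutes S"
    using assms(1) by (simp_all add: signed_perms_on_def)
  then have "bij_betw abs (S - {s}) (insert \<bar>s\<bar> A - {\<bar>s\<bar>})"
    using assms(3) by (intro bij_betw_DiffI) auto
  moreover have "transpose s (w s) \<circ> w permutes S - {s}"
  proof (rule permutes_superset)
    show "transpose s (w s) \<circ> w permutes S"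
      using perm assms(3) by (intro permutes_compose permutes_swap_id) (auto simp: permutes_in_image)
  qed auto
  ultimately show ?thesis
    using assms(2) by (simp add: signed_perms_on_def)
qed

section \<open>Inserting the largest letter\<close>

definition elem_over :: "int \<Rightarrow> int set \<Rightarrow> int" where
  "elem_over m S = (if m \<in> S then m else - m)"

fun cycle_insert :: "(int set \<times> (int \<Rightarrow> int)) \<times> int \<times> int \<Rightarrow> int set \<times> (int \<Rightarrow> int)" where
  "cycle_insert ((S, w), b, s) = (insert s S, transpose (w b) s \<circ> w)"

fun cycle_remove :: "int \<Rightarrow> int set \<times> (int \<Rightarrow> int) \<Rightarrow> (int set \<times> (int \<Rightarrow> int)) \<times> int \<times> int" where
  "cycle_remove m (S, w) = (let s = elem_over m S in ((S - {s}, transpose s (w s) \<circ> w), inv w s, s))"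

context
  fixes A :: "int set" and m :: int
  assumes finite_A: "finite A" and A_range: "\<forall>a\<in>A. 0 < a \<and> a < m" and m_pos: "0 < m"
begin

lemma m_notin: "m \<notin> A"
  using A_range by auto

lemma abs_less_m: "(S, w) \<in> signed_perms_on A \<Longrightarrow> x \<in> S \<Longrightarrow> 0 < \<bar>x\<bar> \<and> \<bar>x\<bar> < m"
  using A_range abs_mem_signed_perms_on by blast

lemma plus_minus_m_fixed:
  assumes "(S, w) \<in> signed_perms_on A" and "s \<in> {m, - m}"
  shows "s \<notin> S" and "w s = s"
proof -
  show "s \<notin> S"
    using abs_less_m[OF assms(1), of s] assms(2) by auto
  with assms(1) show "w s = s"
    by (auto simp: signed_perms_on_def permutes_not_in)
qed

lemma card_two_signs: "card {m, - m} = 2"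
  using m_pos by simp

lemma elem_over_mem:
  assumes "(S, w) \<in> signed_perms_on (insert m A)"
  shows "elem_over m S \<in> S" and "\<bar>elem_over m S\<bar> = m"
proof -
  have "m \<in> abs ` S"
    using assms by (simp add: signed_perms_on_def bij_betw_def)
  then obtain x where "x \<in> S" "\<bar>x\<bar> = m"
    by blast
  then show "elem_over m S \<in> S" "\<bar>elem_over m S\<bar> = m"
    by (auto simp: elem_over_def abs_if split: if_splits)
qed

lemma elem_over_insert: "(S, w) \<in> signed_perms_on A \<Longrightarrow> s \<in> {m, - m} \<Longrightarrow> elem_over m (insert s S) = s"
  using abs_less_m[of S w m] by (auto simp: elem_over_def)

definition fixing_derangements :: "(int set \<times> (int \<Rightarrow> int)) set" where
  "fixing_derangements = {(S, w) \<in> derangements_on (insert m A). w (elem_over m S) = elem_over m S}"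

definition moving_derangements :: "(int set \<times> (int \<Rightarrow> int)) set" where
  "moving_derangements = {(S, w) \<in> derangements_on (insert m A). w (elem_over m S) \<noteq> elem_over m S}"

text \<open>Data for inserting \<open>s\<close> after \<open>b\<close> in the cycle of \<open>b\<close>. Only the image of \<open>b\<close> changes,
  so \<open>w\<close> may fix a positive \<open>b\<close>; this case produces the 2-cycle \<open>(b s)\<close>.\<close>

definition cycle_data :: "((int set \<times> (int \<Rightarrow> int)) \<times> int \<times> int) set" where
  "cycle_data = {((S, w), b, s). (S, w) \<in> signed_perms_on A \<and> b \<in> S \<and> s \<in> {m, - m}
     \<and> is_derangement (S - {b}, w)}"

lemma exc_B_insert_neg_fixed:
  assumes "(S, w) \<in> derangements_on A"
  shows "exc_B (insert (- m) S, w) = Suc (exc_B (S, w))"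
proof -
  have S: "(S, w) \<in> signed_perms_on A"
    using assms by (simp add: derangements_on_def)
  then have "- m \<notin> S" "w (- m) = - m"
    using plus_minus_m_fixed[OF S, of "- m"] by simp_all
  then have "B_excedances (insert (- m) S, w) = insert (- m) (B_excedances (S, w))"
    using B_excedances_insert_fixed m_pos by simp
  moreover have "- m \<notin> B_excedances (S, w)"
    using \<open>- m \<notin> S\<close> by (simp add: B_excedances_def is_B_exc_def)
  ultimately show ?thesis
    using finite_B_excedances[OF finite_A S] by (simp add: exc_B_eq_card)
qed

lemma fixing_derangementsD:
  assumes "(S, w) \<in> fixing_derangements"
  shows "- m \<in> S" and "(S - {- m}, w) \<in> derangements_on A"
proof -
  have S: "(S, w) \<in> signed_perms_on (insert m A)" "is_derangement (S, w)"
    and fixed: "w (elem_over m S) = elem_over m S"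
    using assms by (simp_all add: fixing_derangements_def derangements_on_def)
  have "elem_over m S = - m"
    using elem_over_mem[OF S(1)] S(2) fixed m_pos by (auto simp: is_derangement_def elem_over_def)
  then show "- m \<in> S"
    using elem_over_mem(1)[OF S(1)] by simp
  then have "(S - {- m}, w) \<in> signed_perms_on A"
    using signed_perms_on_remove_fixed[of S w "- m" A] fixed S(1) m_notin m_pos
      \<open>elem_over m S = - m\<close> by simp
  with S(2) show "(S - {- m}, w) \<in> derangements_on A"
    by (simp add: derangements_on_def is_derangement_def)
qed

lemma bij_betw_fixing_derangements:
  "bij_betw (\<lambda>(S, w). (insert (- m) S, w)) (derangements_on A) fixing_derangements"
proof (rule bij_betw_byWitness[where f' = "\<lambda>(S, w). (S - {- m}, w)"])
  show "(\<lambda>(S, w). (insert (- m) S, w)) ` derangements_on A \<subseteq> fixing_derangements"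
  proof clarify
    fix S w assume "(S, w) \<in> derangements_on A"
    then have S: "(S, w) \<in> signed_perms_on A" "is_derangement (S, w)"
      by (simp_all add: derangements_on_def)
    have "- m \<notin> S" "m \<notin> S" "w (- m) = - m"
      using plus_minus_m_fixed[OF S(1), of "- m"] plus_minus_m_fixed[OF S(1), of m] by simp_all
    moreover have "(insert (- m) S, w) \<in> signed_perms_on (insert m A)"
      using signed_perms_on_insert_fixed[OF S(1), of "- m"] m_notin m_pos by simp
    ultimately show "(insert (- m) S, w) \<in> fixing_derangements"
      using S(2) m_pos
      by (auto simp: fixing_derangements_def derangements_on_def is_derangement_def elem_over_def)
  qed
  show "(\<lambda>(S, w). (S - {- m}, w)) ` fixing_derangements \<subseteq> derangements_on A"
    using fixing_derangementsD(2) by auto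
  show "\<forall>p\<in>derangements_on A. (\<lambda>(S, w). (S - {- m}, w)) ((\<lambda>(S, w). (insert (- m) S, w)) p) = p"
    using plus_minus_m_fixed[of _ _ "- m"] by (auto simp: derangements_on_def)
  show "\<forall>p\<in>fixing_derangements. (\<lambda>(S, w). (insert (- m) S, w)) ((\<lambda>(S, w). (S - {- m}, w)) p) = p"
    using fixing_derangementsD(1) by (auto simp: insert_absorb)
qed

lemma sum_fixing_derangements:
  "(\<Sum>p\<in>fixing_derangements. monom 1 (exc_B p)) = [:0, 1:] * dB_on A"
proof -
  have "(\<Sum>p\<in>fixing_derangements. monom (1::real) (exc_B p))
      = (\<Sum>(S, w)\<in>derangements_on A. monom 1 (exc_B (insert (- m) S, w)))"
    using sum.reindex_bij_betw[OF bij_betw_fixing_derangements, of "\<lambda>p. monom 1 (exc_B p)", symmetric]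
    by (simp add: case_prod_unfold)
  also have "\<dots> = (\<Sum>p\<in>derangements_on A. [:0, 1:] * monom 1 (exc_B p))"
    by (intro sum.cong) (auto simp: exc_B_insert_neg_fixed monom_Suc)
  finally show ?thesis
    by (simp add: dB_on_def sum_distrib_left)
qed

lemma cycle_insert_mem:
  assumes "((S, w), b, s) \<in> cycle_data"
  shows "cycle_insert ((S, w), b, s) \<in> moving_derangements"
proof -
  have S: "(S, w) \<in> signed_perms_on A" and b: "b \<in> S" and s: "s \<in> {m, - m}"
    and der: "is_derangement (S - {b}, w)" and perm: "w permutes S"
    using assms by (auto simp: cycle_data_def signed_perms_on_def)
  define W where "W = transpose (w b) s \<circ> w"
  have "s \<notin> S" "\<bar>s\<bar> = m"
    using plus_minus_m_fixed[OF S s] s m_pos by auto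
  have "w b \<in> S"
    using perm b by (simp add: permutes_in_image)
  note W = insert_cycle_apply[OF perm b \<open>s \<notin> S\<close>, folded W_def]
  have "W s \<noteq> s"
    using W(1) \<open>w b \<in> S\<close> \<open>s \<notin> S\<close> by auto
  have "is_derangement (insert s S, W)"
    unfolding is_derangement_def fst_conv snd_conv
  proof (intro ballI impI)
    fix a assume "a \<in> insert s S" "0 < a"
    then consider "a = s" | "a = b" | "a \<in> S - {b}"
      by blast
    then show "W a \<noteq> a"
    proof cases
      case 3
      with W(3) der \<open>0 < a\<close> show ?thesis
        by (simp add: is_derangement_def)
    qed (use \<open>W s \<noteq> s\<close> W(2) b \<open>s \<notin> S\<close> in auto)
  qed
  moreover have "(insert s S, W) \<in> signed_perms_on (insert m A)"
    using signed_perms_on_insert_cycle[OF S b, of s, folded W_def] \<open>\<bar>s\<bar> = m\<close> m_notin by simp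
  ultimately show ?thesis
    unfolding cycle_insert.simps W_def[symmetric]
    using \<open>W s \<noteq> s\<close> elem_over_insert[OF S s]
    by (simp add: moving_derangements_def derangements_on_def)
qed

lemma cycle_remove_mem:
  assumes "(S, w) \<in> moving_derangements"
  shows "cycle_remove m (S, w) \<in> cycle_data"
proof -
  define s where "s = elem_over m S"
  define b where "b = inv w s"
  have S: "(S, w) \<in> signed_perms_on (insert m A)" and der: "is_derangement (S, w)"
    and moved: "w s \<noteq> s" and perm: "w permutes S"
    using assms by (auto simp: moving_derangements_def derangements_on_def signed_perms_on_def s_def)
  have s: "s \<in> S" "\<bar>s\<bar> = m"
    using elem_over_mem[OF S] by (simp_all add: s_def)
  have "w b = s"
    using perm by (simp add: b_def permutes_inverses)
  then have "b \<in> S" "b \<noteq> s"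
    using permutes_in_image[OF perm, of b] s moved by auto
  have "(S - {s}, transpose s (w s) \<circ> w) \<in> signed_perms_on A"
    using signed_perms_on_remove_cycle[of S w s A] S s m_notin by simp
  moreover have "is_derangement (S - {s} - {b}, transpose s (w s) \<circ> w)"
  proof -
    have "w a \<noteq> s" "w a \<noteq> w s" if "a \<in> S - {s} - {b}" for a
      using that \<open>w b = s\<close> s perm by (auto dest: permutes_inj_on[THEN inj_onD])
    then show ?thesis
      using der by (auto simp: is_derangement_def)
  qed
  moreover have "s \<in> {m, - m}"
    using s by auto
  ultimately show ?thesis
    using \<open>b \<in> S\<close> \<open>b \<noteq> s\<close> by (simp add: cycle_data_def s_def[symmetric] b_def[symmetric] Let_def)
qed

lemma cycle_remove_insert:
  assumes "x \<in> cycle_data"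
  shows "cycle_remove m (cycle_insert x) = x"
proof -
  obtain S w b s where x: "x = ((S, w), b, s)"
    by (metis prod.exhaust)
  have S: "(S, w) \<in> signed_perms_on A" and b: "b \<in> S" and s: "s \<in> {m, - m}"
    and perm: "w permutes S"
    using assms by (auto simp: x cycle_data_def signed_perms_on_def)
  define W where "W = transpose (w b) s \<circ> w"
  have "s \<notin> S"
    using plus_minus_m_fixed[OF S s] by simp
  note W = insert_cycle_apply[OF perm b \<open>s \<notin> S\<close>, folded W_def]
  have "inv W s = b"
    using permutes_insert_cycle[OF perm b \<open>s \<notin> S\<close>, folded W_def] W(2)
    by (simp add: permutes_inv_eq)
  moreover have "transpose s (w b) \<circ> W = w"
    by (auto simp: W_def fun_eq_iff transpose_def)
  ultimately show ?thesis
    using \<open>s \<notin> S\<close> elem_over_insert[OF S s] W(1) by (simp add: x W_def[symmetric] Let_def)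
qed

lemma cycle_insert_remove:
  assumes "(S, w) \<in> moving_derangements"
  shows "cycle_insert (cycle_remove m (S, w)) = (S, w)"
proof -
  define s where "s = elem_over m S"
  have perm: "w permutes S" and "s \<in> S"
    using assms elem_over_mem
    by (auto simp: moving_derangements_def derangements_on_def signed_perms_on_def s_def)
  have "(transpose s (w s) \<circ> w) (inv w s) = w s"
    using perm by (simp add: permutes_inverses)
  moreover have "transpose (w s) s \<circ> (transpose s (w s) \<circ> w) = w"
    by (auto simp: fun_eq_iff transpose_def)
  ultimately show ?thesis
    using \<open>s \<in> S\<close> by (simp add: s_def[symmetric] Let_def insert_absorb)
qed

lemma bij_betw_cycle_insert: "bij_betw cycle_insert cycle_data moving_derangements"
proof (rule bij_betw_byWitness[where f' = "cycle_remove m"])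
  show "\<forall>p\<in>moving_derangements. cycle_insert (cycle_remove m p) = p"
    using cycle_insert_remove by auto
  show "\<forall>x\<in>cycle_data. cycle_remove m (cycle_insert x) = x"
    using cycle_remove_insert by auto
  show "cycle_insert ` cycle_data \<subseteq> moving_derangements"
    using cycle_insert_mem by (auto simp: cycle_data_def)
  show "cycle_remove m ` moving_derangements \<subseteq> cycle_data"
    using cycle_remove_mem by auto
qed

text \<open>Every other letter has absolute value below \<open>m\<close>, so after inserting \<open>s\<close> after \<open>b\<close>,
  the letter \<open>s\<close> is a B-excedance iff \<open>s = -m\<close>, and \<open>b\<close> (now mapped to \<open>s\<close>) iff \<open>s = m\<close>.\<close>

lemma B_excedances_cycle_insert:
  assumes "((S, w), b, s) \<in> cycle_data"
  shows "B_excedances (cycle_insert ((S, w), b, s))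
    = insert (if s = m then b else - m) (B_excedances (S, w) - {b})"
proof -
  have S: "(S, w) \<in> signed_perms_on A" and b: "b \<in> S" and s: "s \<in> {m, - m}"
    and perm: "w permutes S"
    using assms by (auto simp: cycle_data_def signed_perms_on_def)
  define W where "W = transpose (w b) s \<circ> w"
  have "s \<notin> S"
    using plus_minus_m_fixed[OF S s] by simp
  note W = insert_cycle_apply[OF perm b \<open>s \<notin> S\<close>, folded W_def]
  have bounds: "- m < a \<and> a < m" if "a \<in> S" for a
    using abs_less_m[OF S that] by arith
  have "w b \<in> S"
    using perm b by (simp add: permutes_in_image)
  have "a \<in> B_excedances (insert s S, W)
      \<longleftrightarrow> a \<in> insert (if s = m then b else - m) (B_excedances (S, w) - {b})" for a
  proof -
    consider "a = s" | "a = b" | "a \<in> S" "a \<noteq> b" | "a \<notin> insert s S"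
      by blast
    then show ?thesis
    proof cases
      case 1
      then show ?thesis
        using W(1) bounds[OF \<open>w b \<in> S\<close>] \<open>s \<notin> S\<close> s b m_pos
        by (auto simp: B_excedances_def is_B_exc_def)
    next
      case 2
      then show ?thesis
        using W(2) bounds[OF b] \<open>s \<notin> S\<close> s b m_pos
        by (auto simp: B_excedances_def is_B_exc_def)
    qed (use W(3) \<open>s \<notin> S\<close> s b in \<open>auto simp: B_excedances_def is_B_exc_def\<close>)
  qed
  then show ?thesis
    unfolding cycle_insert.simps W_def[symmetric] by (rule set_eqI)
qed

lemma exc_B_cycle_insert:
  assumes "((S, w), b, s) \<in> cycle_data"
  shows "exc_B (cycle_insert ((S, w), b, s))
    = (if b \<in> B_excedances (S, w) then exc_B (S, w) else Suc (exc_B (S, w)))"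
proof -
  have S: "(S, w) \<in> signed_perms_on A" and s: "s \<in> {m, - m}"
    using assms by (simp_all add: cycle_data_def)
  have "(if s = m then b else - m) \<notin> B_excedances (S, w) - {b}"
    using plus_minus_m_fixed(1)[OF S s] s by (auto simp: B_excedances_def is_B_exc_def)
  then show ?thesis
    using B_excedances_cycle_insert[OF assms] finite_B_excedances[OF finite_A S]
      card_Suc_Diff1[of "B_excedances (S, w)" b]
    by (cases "b \<in> B_excedances (S, w)") (simp_all add: exc_B_eq_card del: cycle_insert.simps)
qed

lemma cycle_data_derangements:
  "{x \<in> cycle_data. fst x \<in> derangements_on A} = (SIGMA p:derangements_on A. fst p \<times> {m, - m})"
  by (auto simp: cycle_data_def derangements_on_def is_derangement_def)

lemma cycle_data_non_derangement:
  assumes "((S, w), b, s) \<in> cycle_data" and "(S, w) \<notin> derangements_on A"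
  shows "0 < b" and "w b = b"
  using assms by (auto simp: cycle_data_def derangements_on_def is_derangement_def)

lemma insert_fixed_cycle_data:
  assumes "b \<in> A" and "(S, w) \<in> derangements_on (A - {b})"
  shows "s \<in> {m, - m} \<Longrightarrow> ((insert b S, w), b, s) \<in> cycle_data"
    and "(insert b S, w) \<notin> derangements_on A"
proof -
  have S: "(S, w) \<in> signed_perms_on (A - {b})" "is_derangement (S, w)" and "0 < b"
    using assms A_range by (auto simp: derangements_on_def)
  then have "(insert b S, w) \<in> signed_perms_on A"
    using signed_perms_on_insert_fixed[OF S(1), of b] assms(1) by (simp add: insert_absorb)
  moreover have "b \<notin> S" "w b = b"
    using signed_perms_on_Diff_fixed[OF S(1)] \<open>0 < b\<close> by simp_all
  ultimately show "s \<in> {m, - m} \<Longrightarrow> ((insert b S, w), b, s) \<in> cycle_data"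
    and "(insert b S, w) \<notin> derangements_on A"
    using S(2) \<open>0 < b\<close> by (auto simp: cycle_data_def derangements_on_def is_derangement_def)
qed

lemma remove_fixed_cycle_data:
  assumes "((S, w), b, s) \<in> cycle_data" and "(S, w) \<notin> derangements_on A"
  shows "b \<in> A" and "(S - {b}, w) \<in> derangements_on (A - {b})"
proof -
  have "0 < b" "w b = b"
    using cycle_data_non_derangement[OF assms] by simp_all
  have S: "(S, w) \<in> signed_perms_on A" "b \<in> S" "is_derangement (S - {b}, w)"
    using assms(1) by (simp_all add: cycle_data_def)
  then show "b \<in> A"
    using abs_mem_signed_perms_on[OF S(1) S(2)] \<open>0 < b\<close> by simp
  then have "(S - {b}, w) \<in> signed_perms_on (A - {b})"
    using signed_perms_on_remove_fixed[of S w b "A - {b}"] S(1,2) \<open>w b = b\<close> \<open>0 < b\<close>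
    by (simp add: insert_absorb)
  with S(3) show "(S - {b}, w) \<in> derangements_on (A - {b})"
    by (simp add: derangements_on_def)
qed

lemma bij_betw_cycle_data_non_derangements:
  "bij_betw (\<lambda>(b, (S, w), s). ((insert b S, w), b, s))
     (SIGMA b:A. derangements_on (A - {b}) \<times> {m, - m})
     {x \<in> cycle_data. fst x \<notin> derangements_on A}"
proof (rule bij_betw_byWitness[where f' = "\<lambda>((S, w), b, s). (b, (S - {b}, w), s)"])
  show "(\<lambda>(b, (S, w), s). ((insert b S, w), b, s)) ` (SIGMA b:A. derangements_on (A - {b}) \<times> {m, - m})
      \<subseteq> {x \<in> cycle_data. fst x \<notin> derangements_on A}"
    by (auto simp: insert_fixed_cycle_data)
  show "(\<lambda>((S, w), b, s). (b, (S - {b}, w), s)) ` {x \<in> cycle_data. fst x \<notin> derangements_on A}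
      \<subseteq> (SIGMA b:A. derangements_on (A - {b}) \<times> {m, - m})"
    by (auto simp: remove_fixed_cycle_data) (auto simp: cycle_data_def)
  show "\<forall>x\<in>(SIGMA b:A. derangements_on (A - {b}) \<times> {m, - m}).
      (\<lambda>((S, w), b, s). (b, (S - {b}, w), s)) ((\<lambda>(b, (S, w), s). ((insert b S, w), b, s)) x) = x"
  proof
    fix x assume "x \<in> (SIGMA b:A. derangements_on (A - {b}) \<times> {m, - m})"
    moreover obtain b S w s where x: "x = (b, (S, w), s)"
      by (metis prod.exhaust)
    ultimately have "b \<notin> S"
      using signed_perms_on_Diff_fixed(1)[of S w A b] A_range by (auto simp: derangements_on_def)
    then show "(\<lambda>((S, w), b, s). (b, (S - {b}, w), s)) ((\<lambda>(b, (S, w), s). ((insert b S, w), b, s)) x) = x"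
      by (simp add: x)
  qed
  show "\<forall>x\<in>{x \<in> cycle_data. fst x \<notin> derangements_on A}.
      (\<lambda>(b, (S, w), s). ((insert b S, w), b, s)) ((\<lambda>((S, w), b, s). (b, (S - {b}, w), s)) x) = x"
    by (auto simp: cycle_data_def insert_absorb)
qed

lemma sum_cycle_insert_signs:
  assumes "(S, w) \<in> derangements_on A"
  shows "(\<Sum>y\<in>S \<times> {m, - m}. monom 1 (exc_B (cycle_insert ((S, w), y))))
    = eulerian_op (card A) (monom 1 (exc_B (S, w)))"
proof -
  let ?E = "B_excedances (S, w)" and ?e = "exc_B (S, w)"
  have S: "(S, w) \<in> signed_perms_on A"
    using assms by (simp add: derangements_on_def)
  have "finite S" "card S = card A"
    using S finite_A by (auto simp: signed_perms_on_def bij_betw_finite bij_betw_same_card)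
  have "((S, w), b, s) \<in> cycle_data" if "b \<in> S" "s \<in> {m, - m}" for b s
    using that assms by (auto simp: cycle_data_def derangements_on_def is_derangement_def)
  then have exc: "exc_B (cycle_insert ((S, w), b, s)) = (if b \<in> ?E then ?e else Suc ?e)"
    if "b \<in> S" "s \<in> {m, - m}" for b s
    using exc_B_cycle_insert that by simp
  have "(\<Sum>y\<in>S \<times> {m, - m}. monom (1::real) (exc_B (cycle_insert ((S, w), y))))
      = (\<Sum>b\<in>S. \<Sum>s\<in>{m, - m}. monom 1 (exc_B (cycle_insert ((S, w), b, s))))"
    by (rule sum.cartesian_product')
  also have "\<dots> = (\<Sum>b\<in>S. \<Sum>s\<in>{m, - m}. monom 1 (if b \<in> ?E then ?e else Suc ?e))"
    using exc by (intro sum.cong refl) simp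
  also have "\<dots> = (\<Sum>b\<in>S. monom 2 (if b \<in> ?E then ?e else Suc ?e))"
    by (simp add: card_two_signs numeral_mult_conv_smult smult_monom)
  also have "\<dots> = monom (2 * real (card ?E)) ?e + monom (2 * real (card S - card ?E)) (Suc ?e)"
    using \<open>finite S\<close> by (intro sum_monom_if) (auto simp: B_excedances_def is_B_exc_def)
  also have "\<dots> = eulerian_op (card A) (monom 1 ?e)"
    using exc_B_le_card[OF finite_A S] \<open>card S = card A\<close> by (simp add: eulerian_op_monom exc_B_eq_card)
  finally show ?thesis .
qed

lemma sum_cycle_derangements:
  "(\<Sum>x\<in>(SIGMA p:derangements_on A. fst p \<times> {m, - m}). monom 1 (exc_B (cycle_insert x)))
    = eulerian_op (card A) (dB_on A)"
proof -
  have "finite (fst p \<times> {m, - m})" if "p \<in> derangements_on A" for p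
    using that finite_A by (auto simp: derangements_on_def signed_perms_on_def bij_betw_finite)
  then have "(\<Sum>x\<in>(SIGMA p:derangements_on A. fst p \<times> {m, - m}). monom (1::real) (exc_B (cycle_insert x)))
      = (\<Sum>p\<in>derangements_on A. \<Sum>y\<in>fst p \<times> {m, - m}. monom 1 (exc_B (cycle_insert (p, y))))"
    using sum.Sigma[of "derangements_on A" "\<lambda>p. fst p \<times> {m, - m}"
        "\<lambda>p y. monom (1::real) (exc_B (cycle_insert (p, y)))"] finite_derangements_on[OF finite_A]
    by simp
  also have "\<dots> = (\<Sum>p\<in>derangements_on A. eulerian_op (card A) (monom 1 (exc_B p)))"
    using sum_cycle_insert_signs by (intro sum.cong) auto
  finally show ?thesis
    by (simp add: dB_on_def eulerian_op_sum)
qed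

lemma sum_cycle_non_derangements:
  "(\<Sum>x\<in>{x \<in> cycle_data. fst x \<notin> derangements_on A}. monom 1 (exc_B (cycle_insert x)))
    = smult 2 ([:0, 1:] * (\<Sum>b\<in>A. dB_on (A - {b})))"
proof -
  let ?h = "\<lambda>x. monom (1::real) (exc_B (cycle_insert x))"
  have exc: "exc_B (cycle_insert ((insert b (fst p), snd p), b, s)) = Suc (exc_B p)"
    if "b \<in> A" "p \<in> derangements_on (A - {b})" "s \<in> {m, - m}" for b p s
  proof -
    obtain S w where p: "p = (S, w)"
      by (cases p)
    have data: "((insert b S, w), b, s) \<in> cycle_data" "(insert b S, w) \<notin> derangements_on A"
      using insert_fixed_cycle_data[of b S w] that by (simp_all add: p)
    then have "0 < b" "w b = b"
      by (rule cycle_data_non_derangement)+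
    moreover have "b \<notin> S"
      using that A_range signed_perms_on_Diff_fixed(1)[of S w A b] by (auto simp: p derangements_on_def)
    ultimately show ?thesis
      using exc_B_cycle_insert[OF data(1)] B_excedances_insert_fixed[of b S w]
      by (simp add: p B_excedances_def is_B_exc_def exc_B_eq_card del: cycle_insert.simps)
  qed
  have "(\<Sum>x\<in>{x \<in> cycle_data. fst x \<notin> derangements_on A}. ?h x)
      = (\<Sum>(b, (S, w), s)\<in>(SIGMA b:A. derangements_on (A - {b}) \<times> {m, - m}).
           ?h ((insert b S, w), b, s))"
    using sum.reindex_bij_betw[OF bij_betw_cycle_data_non_derangements, of ?h, symmetric]
    by (simp add: case_prod_unfold del: cycle_insert.simps)
  also have "\<dots> = (\<Sum>b\<in>A. \<Sum>((S, w), s)\<in>derangements_on (A - {b}) \<times> {m, - m}.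
      ?h ((insert b S, w), b, s))"
    by (rule sum.Sigma[symmetric]) (use finite_A finite_derangements_on in auto)
  also have "\<dots> = (\<Sum>b\<in>A. \<Sum>p\<in>derangements_on (A - {b}). \<Sum>s\<in>{m, - m}.
      ?h ((insert b (fst p), snd p), b, s))"
    by (simp add: sum.cartesian_product' case_prod_unfold del: cycle_insert.simps)
  also have "\<dots> = (\<Sum>b\<in>A. \<Sum>p\<in>derangements_on (A - {b}). \<Sum>s\<in>{m, - m}. monom 1 (Suc (exc_B p)))"
    using exc by (intro sum.cong refl) (simp del: cycle_insert.simps)
  also have "\<dots> = (\<Sum>b\<in>A. \<Sum>p\<in>derangements_on (A - {b}). 2 * ([:0, 1:] * monom 1 (exc_B p)))"
    by (simp add: card_two_signs monom_Suc)
  also have "\<dots> = smult 2 ([:0, 1:] * (\<Sum>b\<in>A. dB_on (A - {b})))"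
    by (simp add: dB_on_def sum_distrib_left numeral_mult_conv_smult[symmetric])
  finally show ?thesis .
qed

lemma dB_on_insert:
  "dB_on (insert m A) = [:0, 1:] * dB_on A + eulerian_op (card A) (dB_on A)
    + smult 2 ([:0, 1:] * (\<Sum>b\<in>A. dB_on (A - {b})))"
proof -
  let ?f = "\<lambda>p. monom (1::real) (exc_B p)"
  let ?D = "{x \<in> cycle_data. fst x \<in> derangements_on A}"
  and ?N = "{x \<in> cycle_data. fst x \<notin> derangements_on A}"
  have fin: "finite (derangements_on (insert m A))"
    using finite_A by (simp add: finite_derangements_on)
  have split: "derangements_on (insert m A) = fixing_derangements \<union> moving_derangements"
    by (auto simp: fixing_derangements_def moving_derangements_def)
  have "finite fixing_derangements" "finite moving_derangements"
    using fin unfolding split by simp_all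
  moreover have "fixing_derangements \<inter> moving_derangements = {}"
    by (auto simp: fixing_derangements_def moving_derangements_def)
  ultimately have dB_split: "dB_on (insert m A) = sum ?f fixing_derangements + sum ?f moving_derangements"
    unfolding dB_on_def split by (rule sum.union_disjoint)
  have "finite cycle_data"
    using bij_betw_finite[OF bij_betw_cycle_insert] \<open>finite moving_derangements\<close> by simp
  have "sum ?f moving_derangements = (\<Sum>x\<in>cycle_data. ?f (cycle_insert x))"
    by (rule sum.reindex_bij_betw[OF bij_betw_cycle_insert, symmetric])
  also have "\<dots> = (\<Sum>x\<in>?D \<union> ?N. ?f (cycle_insert x))"
    by (rule sum.cong) auto
  also have "\<dots> = (\<Sum>x\<in>?D. ?f (cycle_insert x)) + (\<Sum>x\<in>?N. ?f (cycle_insert x))"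
    using \<open>finite cycle_data\<close> by (intro sum.union_disjoint) auto
  finally show ?thesis
    using dB_split
    by (simp add: sum_fixing_derangements cycle_data_derangements sum_cycle_derangements
        sum_cycle_non_derangements)
qed

lemma dB_on_insert_card:
  assumes "dB_on A = dB (card A)" and "\<And>b. b \<in> A \<Longrightarrow> dB_on (A - {b}) = dB (card A - 1)"
  shows "dB_on (insert m A) = [:0, 1:] * dB (card A) + eulerian_op (card A) (dB (card A))
    + smult (2 * real (card A)) ([:0, 1:] * dB (card A - 1))"
proof -
  have "(\<Sum>b\<in>A. dB_on (A - {b})) = (\<Sum>b\<in>A. dB (card A - 1))"
    by (intro sum.cong) (simp_all add: assms(2))
  then show ?thesis
    by (intro poly_ext) (simp add: dB_on_insert assms(1))
qed

end

section \<open>The recursion for \<open>dB\<close>\<close>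

lemma insert_Max_Diff:
  fixes A :: "int set"
  assumes "finite A" and "A \<noteq> {}" and "\<forall>a\<in>A. 0 < a"
  shows "A = insert (Max A) (A - {Max A})" and "\<forall>a\<in>A - {Max A}. 0 < a \<and> a < Max A"
    and "0 < Max A"
proof -
  have "Max A \<in> A"
    using assms by simp
  then show "A = insert (Max A) (A - {Max A})" "0 < Max A"
    using assms(3) by auto
  show "\<forall>a\<in>A - {Max A}. 0 < a \<and> a < Max A"
    using assms Max_ge[OF assms(1)] by (auto simp: order.order_iff_strict)
qed

lemma dB_on_insert_eq_dB:
  assumes "finite B" and "\<forall>a\<in>B. 0 < a \<and> a < m" and "0 < m"
    and "\<And>C. C \<subseteq> B \<Longrightarrow> dB_on C = dB (card C)"
  shows "dB_on (insert m B) = [:0, 1:] * dB (card B) + eulerian_op (card B) (dB (card B))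
    + smult (2 * real (card B)) ([:0, 1:] * dB (card B - 1))"
proof (rule dB_on_insert_card[OF assms(1-3)])
  show "dB_on B = dB (card B)"
    using assms(4) by simp
  show "dB_on (B - {b}) = dB (card B - 1)" if "b \<in> B" for b
    using assms(4)[of "B - {b}"] assms(1) that by (simp add: card_Diff_singleton)
qed

lemma dB_on_eq_dB:
  assumes "finite A" and "\<forall>a\<in>A. 0 < a"
  shows "dB_on A = dB (card A)"
  using assms
proof (induction "card A" arbitrary: A rule: less_induct)
  case less
  show ?case
  proof (cases "A = {}")
    case True
    then show ?thesis
      by (simp add: dB_on_empty dB_eq_dB_on)
  next
    case False
    define k where "k = card A - 1"
    have "card A = Suc k"
      using less.prems False by (simp add: k_def card_gt_0_iff)
    have IH: "dB_on C = dB (card C)" if "C \<subseteq> B" "finite B" "\<forall>a\<in>B. 0 < a" "card B = k" for B C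
    proof -
      have "finite C" "card C < card A"
        using that card_mono[of B C] finite_subset[of C B] \<open>card A = Suc k\<close> by auto
      then show ?thesis
        using less.hyps[of C] that by auto
    qed
    note A = insert_Max_Diff[OF less.prems(1) False less.prems(2)]
    have "finite (A - {Max A})" "card (A - {Max A}) = k"
      using \<open>card A = Suc k\<close> less.prems(1) False by (simp_all add: card_Diff_singleton)
    moreover have "\<forall>a\<in>{1..int k}. 0 < a \<and> a < int (Suc k)"
      by auto
    ultimately have step: "dB_on (insert (Max A) (A - {Max A})) = dB_on (insert (int (Suc k)) {1..int k})"
      using dB_on_insert_eq_dB[of "A - {Max A}" "Max A"] dB_on_insert_eq_dB[of "{1..int k}" "int (Suc k)"]
        IH[of _ "A - {Max A}"] IH[of _ "{1..int k}"] A(2,3) less.prems(2)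
      by simp
    have "dB_on A = dB_on (insert (Max A) (A - {Max A}))"
      using A(1) by (rule arg_cong)
    also have "\<dots> = dB_on (insert (int (Suc k)) {1..int k})"
      by (fact step)
    also have "\<dots> = dB (card A)"
    proof -
      have "{1..int (Suc k)} = insert (int (Suc k)) {1..int k}"
        by auto
      then show ?thesis
        by (simp only: \<open>card A = Suc k\<close> dB_eq_dB_on)
    qed
    finally show ?thesis .
  qed
qed

lemma dB_0: "dB 0 = 1"
  by (simp add: dB_eq_dB_on dB_on_empty)

lemma dB_1: "dB (Suc 0) = [:0, 1:]"
  using dB_on_insert[of "{}" 1] by (simp add: dB_eq_dB_on dB_on_empty eulerian_op_def)

lemma dB_Suc_Suc:
  "dB (Suc (Suc n)) = eulerian_op (Suc n) (dB (Suc n)) + [:0, 1:] * dB (Suc n)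
     + smult (2 * real (Suc n)) ([:0, 1:] * dB n)"
proof -
  have "{1..int (Suc (Suc n))} = insert (int (Suc (Suc n))) {1..int (Suc n)}"
    by auto
  then have "dB (Suc (Suc n)) = dB_on (insert (int (Suc (Suc n))) {1..int (Suc n)})"
    by (simp only: dB_eq_dB_on)
  also have "\<dots> = [:0, 1:] * dB (Suc n) + eulerian_op (Suc n) (dB (Suc n))
      + smult (2 * real (Suc n)) ([:0, 1:] * dB n)"
  proof -
    have "nat (int n + 1) = Suc n"
      by (simp add: nat_add_distrib)
    moreover have "dB_on C = dB (card C)" if "C \<subseteq> {1..int (Suc n)}" for C
      using that by (intro dB_on_eq_dB) (auto intro: finite_subset)
    ultimately show ?thesis
      using dB_on_insert_eq_dB[of "{1..int (Suc n)}" "int (Suc (Suc n))"] by simp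
  qed
  finally show ?thesis
    by simp
qed

section \<open>Splitting \<open>dB\<close> into palindromic parts\<close>

text \<open>The terms of \<open>dB_Suc_Suc\<close> sorted by palindromic degree \<open>n + 2\<close> or \<open>n + 3\<close>, after
  writing \<open>eulerian_op (n + 1) b + x b\<close> as \<open>(eulerian_op (n + 2) b - (1 + x) b) + b\<close>.\<close>

fun palindromic_parts :: "nat \<Rightarrow> real poly \<times> real poly" where
  "palindromic_parts 0 = (1, 0)"
| "palindromic_parts (Suc 0) = (0, [:0, 1:])"
| "palindromic_parts (Suc (Suc n)) =
     (let (a1, b1) = palindromic_parts (Suc n); (a0, b0) = palindromic_parts n in
      (eulerian_op (Suc n) a1 + b1 + smult (2 * real (Suc n)) ([:0, 1:] * a0),
       [:0, 1:] * a1 + eulerian_op (Suc (Suc n)) b1 - [:1, 1:] * b1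
         + smult (2 * real (Suc n)) ([:0, 1:] * b0)))"

lemma palindromic_parts:
  "palindromic n (fst (palindromic_parts n)) \<and> palindromic (Suc n) (snd (palindromic_parts n))"
proof (induction n rule: palindromic_parts.induct)
  case 1
  show ?case
    by (simp add: palindromic_1)
next
  case 2
  show ?case
    using palindromic_times_x[OF palindromic_1] by simp
next
  case (3 n)
  obtain a1 b1 a0 b0 where parts: "palindromic_parts (Suc n) = (a1, b1)" "palindromic_parts n = (a0, b0)"
    by (cases "palindromic_parts (Suc n)", cases "palindromic_parts n")
  have "palindromic (Suc n) a1" "palindromic (Suc (Suc n)) b1" "palindromic n a0" "palindromic (Suc n) b0"
    using 3 parts by simp_all
  then show ?case
    unfolding palindromic_parts.simps parts Let_def prod.case fst_conv snd_conv
    by (intro conjI palindromic_add palindromic_diff palindromic_smult palindromic_times_x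
        palindromic_times_1_plus_x palindromic_eulerian_op)
qed

lemma palindromic_parts_sum: "fst (palindromic_parts n) + snd (palindromic_parts n) = dB n"
proof (induction n rule: palindromic_parts.induct)
  case (3 n)
  obtain a1 b1 a0 b0 where parts: "palindromic_parts (Suc n) = (a1, b1)" "palindromic_parts n = (a0, b0)"
    by (cases "palindromic_parts (Suc n)", cases "palindromic_parts n")
  have "dB (Suc n) = a1 + b1" "dB n = a0 + b0"
    using 3 parts by simp_all
  then show ?case
    unfolding palindromic_parts.simps parts Let_def prod.case fst_conv snd_conv dB_Suc_Suc
    by (intro poly_ext) (simp add: eulerian_op_Suc eulerian_op_add algebra_simps)
qed (simp_all add: dB_0 dB_1)

lemma fplus_fminus_eqI:
  assumes "dB n = p + q" and "palindromic n p" and "palindromic (Suc n) q"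
  shows "fplus_fminus n = (p, q)"
  unfolding fplus_fminus_def
proof (rule the_equality)
  show "case (p, q) of (p, q) \<Rightarrow> dB n = p + q
      \<and> (\<forall>x. x \<noteq> 0 \<longrightarrow> poly p x = x ^ n * poly p (1 / x))
      \<and> (\<forall>x. x \<noteq> 0 \<longrightarrow> poly q x = x ^ (n + 1) * poly q (1 / x))"
    using assms(1) poly_palindromic[OF assms(2)] poly_palindromic[OF assms(3)]
    unfolding prod.case Suc_eq_plus1 by blast
next
  fix pq :: "real poly \<times> real poly"
  assume pq_spec: "case pq of (p', q') \<Rightarrow> dB n = p' + q'
      \<and> (\<forall>x. x \<noteq> 0 \<longrightarrow> poly p' x = x ^ n * poly p' (1 / x))
      \<and> (\<forall>x. x \<noteq> 0 \<longrightarrow> poly q' x = x ^ (n + 1) * poly q' (1 / x))"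
  obtain p' q' where pq: "pq = (p', q')"
    by (cases pq)
  from pq_spec have "dB n = p' + q'"
    and p': "\<And>x. x \<noteq> 0 \<Longrightarrow> poly p' x = x ^ n * poly p' (1 / x)"
    and q': "\<And>x. x \<noteq> 0 \<Longrightarrow> poly q' x = x ^ Suc n * poly q' (1 / x)"
    unfolding pq prod.case Suc_eq_plus1 by blast+
  have "p' + q' = p + q"
    using assms(1) \<open>dB n = p' + q'\<close> by simp
  then have "p' - p = q - q'"
    by (simp add: algebra_simps)
  txt \<open>The difference \<open>p' - p = q - q'\<close> is reciprocal of both degrees \<open>n\<close> and \<open>n + 1\<close>.
    The reciprocity facts are only instantiated at a point, since as rewrite rules they loop.\<close>
  have "p' - p = 0"
  proof (rule reciprocal_poly_eq_0)
    fix x :: real assume "x \<noteq> 0"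
    have "poly p' x = x ^ n * poly p' (1 / x)" "poly p x = x ^ n * poly p (1 / x)"
      using p' poly_palindromic[OF assms(2)] \<open>x \<noteq> 0\<close> by blast+
    then show "poly (p' - p) x = x ^ n * poly (p' - p) (1 / x)"
      by (simp add: algebra_simps)
    have "poly q' x = x ^ Suc n * poly q' (1 / x)" "poly q x = x ^ Suc n * poly q (1 / x)"
      using q' poly_palindromic[OF assms(3)] \<open>x \<noteq> 0\<close> by blast+
    then show "poly (p' - p) x = x ^ Suc n * poly (p' - p) (1 / x)"
      unfolding \<open>p' - p = q - q'\<close> by (simp add: algebra_simps)
  qed
  with \<open>p' + q' = p + q\<close> pq show "pq = (p, q)"
    by simp
qed

lemma palindromic_parts_eq: "palindromic_parts n = (fplus n, fminus n)"
  using fplus_fminus_eqI[OF palindromic_parts_sum[symmetric]] palindromic_parts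
  by (simp add: fplus_def fminus_def)

lemma fplus_Suc_Suc:
  "fplus (Suc (Suc k)) = eulerian_op (Suc k) (fplus (Suc k)) + fminus (Suc k)
     + smult (2 * real (Suc k)) ([:0, 1:] * fplus k)"
  using palindromic_parts.simps(3)[of k] by (simp add: palindromic_parts_eq)

theorem proposition7p8:
  fixes n :: nat
  assumes "n \<ge> 1"
  shows "fplus n =
           [:-1, 2 * real (n - 1):] * fplus (n - 1)
         + [:0, 2, -2:] * pderiv (fplus (n - 1))
         + (if n \<ge> 2 then [:0, 2 * real (n - 1):] * fplus (n - 2) else 0)
         + dB (n - 1)"
proof (cases n rule: palindromic_parts.cases)
  case 2
  have "fplus 0 = 1" "fplus (Suc 0) = 0"
    using palindromic_parts_eq[of 0] palindromic_parts_eq[of 1] by simp_all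
  with 2 show ?thesis
    by (intro poly_ext) (simp add: dB_0)
next
  case (3 k)
  have "dB (Suc k) = fplus (Suc k) + fminus (Suc k)"
    using palindromic_parts_sum[of "Suc k"] by (simp add: palindromic_parts_eq)
  with 3 show ?thesis
    by (intro poly_ext) (simp add: fplus_Suc_Suc eulerian_op_def algebra_simps)
qed (use assms in simp)

end
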